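(* Let $p>5$ be a prime, $q=p^h$, and let $\mathcal{F}$ be the projective closure of $ax^ny^m+x^n+y^m=1$ over $\mathbb{F}_q$, where $a\in\mathbb{F}_q$, $a\ne0$, $a\neq-1$, and $m,n$ are positive integers with $p\nmid mn$, $n\ge m$, $\min\{m,n\}>2$. If $\mathcal{F}$ is nonclassical with respect to conics, then $p\mid(n+1)(n-1)$ and $p\mid(m+1)(m-1)$.
   Context: With $\varphi_0,\dots,\varphi_5$ the monomials of degree 2 in $x,y,1$, $\tau$ separating and $D^{(k)}_\tau$ Hasse derivatives, the order sequence w.r.t. conics is the lexicographically smallest $\varepsilon_0<\dots<\varepsilon_5$ with $\det(D^{(\varepsilon_i)}_\tau\varphi_j)\ne0$; the curve is classical w.r.t. conics if $\varepsilon_i=i$ for all $i$, nonclassical otherwise. *)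

theory Defs
  imports Main "Jordan_Normal_Form.Determinant" "HOL-Computational_Algebra.Polynomial"
begin

(* The function field of the curve is modelled as the subfield K(x,y) of an ambient field
   'b, generated by the image of F_q under a field embedding emb together with x and y. *)

definition field_embedding :: "('a::field \<Rightarrow> 'b::field) \<Rightarrow> bool" where
  "field_embedding emb \<longleftrightarrow> emb 1 = 1 \<and>
     (\<forall>c d. emb (c + d) = emb c + emb d) \<and> (\<forall>c d. emb (c * d) = emb c * emb d)"

definition transcendental_over :: "('a::field \<Rightarrow> 'b::field) \<Rightarrow> 'b \<Rightarrow> bool" where
  "transcendental_over emb x \<longleftrightarrow>
     (\<forall>P :: 'a poly. P \<noteq> 0 \<longrightarrow> poly (map_poly emb P) x \<noteq> 0)"

inductive_set gen_field :: "('a::field \<Rightarrow> 'b::field) \<Rightarrow> 'b \<Rightarrow> 'b \<Rightarrow> 'b set"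
  for emb x y where
  const: "emb c \<in> gen_field emb x y"
| genx: "x \<in> gen_field emb x y"
| geny: "y \<in> gen_field emb x y"
| add: "u \<in> gen_field emb x y \<Longrightarrow> v \<in> gen_field emb x y \<Longrightarrow> u + v \<in> gen_field emb x y"
| mult: "u \<in> gen_field emb x y \<Longrightarrow> v \<in> gen_field emb x y \<Longrightarrow> u * v \<in> gen_field emb x y"
| uminus: "u \<in> gen_field emb x y \<Longrightarrow> - u \<in> gen_field emb x y"
| inverse: "u \<in> gen_field emb x y \<Longrightarrow> inverse u \<in> gen_field emb x y"

(* K(x,y) is then the function field
   of the curve (and of its projective closure). *)
definition generic_point_of_curve ::
  "('a::field \<Rightarrow> 'b::field) \<Rightarrow> 'a \<Rightarrow> nat \<Rightarrow> nat \<Rightarrow> 'b \<Rightarrow> 'b \<Rightarrow> bool" where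
  "generic_point_of_curve emb a n m x y \<longleftrightarrow>
     field_embedding emb \<and> transcendental_over emb x \<and>
     emb a * x ^ n * y ^ m + x ^ n + y ^ m = 1"

(* D is the family of Hasse derivatives D^(k) with respect to tau, trivial on F_q:
   an iterative higher derivation with D^(1) tau = 1 and D^(k) tau = 0 for k >= 2.
   (Existence of such D forces tau to be a separating variable.) *)
definition hasse_derivatives_wrt ::
  "('a::field \<Rightarrow> 'b::field) \<Rightarrow> 'b \<Rightarrow> (nat \<Rightarrow> 'b \<Rightarrow> 'b) \<Rightarrow> bool" where
  "hasse_derivatives_wrt emb \<tau> D \<longleftrightarrow>
     (\<forall>u. D 0 u = u) \<and>
     (\<forall>k u v. D k (u + v) = D k u + D k v) \<and>
     (\<forall>k u v. D k (u * v) = (\<Sum>i\<le>k. D i u * D (k - i) v)) \<and>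
     (\<forall>k c. 0 < k \<longrightarrow> D k (emb c) = 0) \<and>
     (\<forall>i j u. D i (D j u) = of_nat ((i + j) choose i) * D (i + j) u) \<and>
     D 1 \<tau> = 1 \<and> (\<forall>k\<ge>2. D k \<tau> = 0)"

definition conic_monomials :: "'b::field \<Rightarrow> 'b \<Rightarrow> 'b list" where
  "conic_monomials x y = [1, x, y, x^2, x*y, y^2]"

definition conic_det :: "(nat \<Rightarrow> 'b::field \<Rightarrow> 'b) \<Rightarrow> (nat \<Rightarrow> nat) \<Rightarrow> 'b \<Rightarrow> 'b \<Rightarrow> 'b" where
  "conic_det D \<epsilon> x y = det (mat 6 6 (\<lambda>(i, j). D (\<epsilon> i) (conic_monomials x y ! j)))"

(* order sequence w.r.t. conics: lexicographically smallest strictly increasing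
   eps_0 < ... < eps_5 with nonzero determinant.  Classical iff it is (0,1,...,5). *)
definition admissible_conic_orders :: "(nat \<Rightarrow> 'b::field \<Rightarrow> 'b) \<Rightarrow> 'b \<Rightarrow> 'b \<Rightarrow> (nat \<Rightarrow> nat) \<Rightarrow> bool" where
  "admissible_conic_orders D x y \<epsilon> \<longleftrightarrow>
     (\<forall>i j. i < j \<longrightarrow> j < 6 \<longrightarrow> \<epsilon> i < \<epsilon> j) \<and> conic_det D \<epsilon> x y \<noteq> 0"

definition lex_less6 :: "(nat \<Rightarrow> nat) \<Rightarrow> (nat \<Rightarrow> nat) \<Rightarrow> bool" where
  "lex_less6 e f \<longleftrightarrow> (\<exists>k<6. (\<forall>i<k. e i = f i) \<and> e k < f k)"

definition classical_wrt_conics :: "(nat \<Rightarrow> 'b::field \<Rightarrow> 'b) \<Rightarrow> 'b \<Rightarrow> 'b \<Rightarrow> bool" where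
  "classical_wrt_conics D x y \<longleftrightarrow>
     admissible_conic_orders D x y (\<lambda>i. i) \<and>
     (\<forall>e. admissible_conic_orders D x y e \<longrightarrow> \<not> lex_less6 e (\<lambda>i. i))"

end

theory Submission
  imports Defs "Jordan_Normal_Form.Char_Poly" "HOL-Number_Theory.Cong"
begin

text \<open>
  If the curve is nonclassical with respect to conics, the Wronskian \<open>det (D^(i) \<phi>_j)\<close> of the
  six conic monomials vanishes. As \<open>p > 5\<close>, the Hasse derivatives \<open>D^(i)\<close>, \<open>i \<le> 5\<close>, are
  triangular combinations, with invertible diagonal, of the iterates of the derivation
  \<open>d = D^(1) / D^(1) x\<close>, so the Wronskian of these iterates vanishes as well. Since \<open>d x = 1\<close>,
  this is Monge's differential equation of conics,
  \<open>y'' (40 y'''^3 - 45 y'' y''' y'''' + 9 y''^2 y^(5)) = 0\<close>.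
  Differentiating the curve equation gives \<open>d^k y = y N_k(x) / (x E(x))^k\<close> for explicit
  polynomials \<open>N_k\<close> and \<open>E\<close>; as \<open>x\<close> is transcendental, either \<open>N_2\<close> or the polynomial obtained
  from Monge's bracket vanishes identically. Their lowest and highest coefficients show that
  \<open>p\<close> divides \<open>n - 1\<close>, or divides both \<open>2(n-1)^3(n-2)(2n-1)(n+1)\<close> and
  \<open>2(n+1)^3(n+2)(2n+1)(n-1)\<close>; as \<open>p > 5\<close>, either way \<open>p\<close> divides \<open>(n+1)(n-1)\<close>.
  Since \<open>y\<close> is transcendental too, exchanging \<open>x\<close> and \<open>y\<close> gives the condition on \<open>m\<close>.
\<close>

section \<open>The characteristic of a finite ring\<close>

lemma card_range_of_nat: "card (range (of_nat :: nat \<Rightarrow> 'a::{ring_1,finite})) = CHAR('a)"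
proof -
  have "range (of_nat :: nat \<Rightarrow> 'a) = of_nat ` {..<CHAR('a)}"
  proof (intro equalityI subsetI)
    fix s :: 'a assume "s \<in> range of_nat"
    then obtain k where "s = of_nat k" by auto
    then have "s = of_nat (k mod CHAR('a))"
      by (simp add: of_nat_eq_iff_cong_CHAR cong_def)
    then show "s \<in> of_nat ` {..<CHAR('a)}"
      using finite_imp_CHAR_pos[where 'a = 'a] by auto
  qed auto
  also have "card \<dots> = CHAR('a)"
    by (subst card_image) (auto intro!: inj_onI simp: of_nat_eq_iff_cong_CHAR cong_def)
  finally show ?thesis .
qed

lemma uminus_of_nat_in_range: "- of_nat k \<in> range (of_nat :: nat \<Rightarrow> 'a::{ring_1,finite})"
proof -
  have "k + (CHAR('a) - 1) * k = CHAR('a) * k"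
    using finite_imp_CHAR_pos[where 'a = 'a] by (cases "CHAR('a)") simp_all
  then have "of_nat k + of_nat ((CHAR('a) - 1) * k) = (0::'a)"
    by (metis of_nat_CHAR of_nat_add mult_zero_left of_nat_mult)
  then have "- of_nat k = (of_nat ((CHAR('a) - 1) * k) :: 'a)"
    by (simp only: neg_eq_iff_add_eq_0)
  then show ?thesis by (metis rangeI)
qed

text \<open>\<open>CHAR_dvd_CARD\<close> in \<open>HOL-Number_Theory.Residues\<close> states the same, but that theory pulls in
  \<open>HOL-Algebra\<close>, whose \<open>coeff\<close>, \<open>degree\<close> and \<open>monom\<close> would shadow the polynomial ones.\<close>

lemma CHAR_dvd_card_UNIV: "CHAR('a::{ring_1,finite}) dvd card (UNIV :: 'a set)"
proof -
  let ?S = "range (of_nat :: nat \<Rightarrow> 'a)"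
  define r where "r = {(u, v :: 'a). v - u \<in> ?S}"
  have "equiv UNIV r"
  proof (rule equivI)
    show "refl r" unfolding r_def refl_on_def by (auto intro: range_eqI[of _ _ 0])
    show "sym r"
    proof (rule symI)
      fix u v assume "(u, v) \<in> r"
      then obtain k where "v - u = of_nat k" unfolding r_def by auto
      then have "u - v = - of_nat k" by (metis minus_diff_eq)
      then show "(v, u) \<in> r"
        using uminus_of_nat_in_range[of k, where 'a = 'a] unfolding r_def by simp
    qed
    show "trans r"
    proof (rule transI)
      fix u v w assume "(u, v) \<in> r" "(v, w) \<in> r"
      then obtain i j where "v - u = of_nat i" "w - v = of_nat j" unfolding r_def by auto
      then have "w - u = of_nat (j + i)" by (simp add: algebra_simps)
      then have "w - u \<in> ?S" by (metis rangeI)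
      then show "(u, w) \<in> r" unfolding r_def by simp
    qed
  qed simp
  moreover have "card X = CHAR('a)" if "X \<in> UNIV // r" for X
  proof -
    from that obtain u where "X = r `` {u}" by (auto elim: quotientE)
    also have "r `` {u} = (+) u ` ?S"
    proof (intro equalityI subsetI)
      fix v assume "v \<in> r `` {u}"
      then have "v - u \<in> ?S" unfolding r_def by simp
      then show "v \<in> (+) u ` ?S" by (rule image_eqI[rotated]) simp
    qed (auto simp: r_def)
    finally have "card X = card ?S"
      using card_image[OF inj_on_add] by (simp only:)
    with card_range_of_nat show ?thesis by simp
  qed
  ultimately show ?thesis
    using equiv_imp_dvd_card[of UNIV r "CHAR('a)"] by simp
qed

lemma CHAR_eq_prime_of_card:
  assumes "prime p" and "card (UNIV :: 'a::{field,finite} set) = p ^ h"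
  shows "CHAR('a) = p"
proof -
  have "prime CHAR('a)"
    by (rule prime_CHAR_semidom) (simp add: finite_imp_CHAR_pos)
  moreover have "CHAR('a) dvd p ^ h"
    using CHAR_dvd_card_UNIV[where 'a = 'a] assms(2) by simp
  ultimately show ?thesis
    using assms(1) prime_dvd_power primes_dvd_imp_eq by blast
qed

section \<open>Determinants\<close>

lemma det_eq_entry_mult_cofactor:
  fixes A :: "'a::comm_ring_1 mat"
  assumes A: "A \<in> carrier_mat n n" and "i < n" and "j < n"
    and zero: "\<And>k. k < n \<Longrightarrow> k \<noteq> i \<Longrightarrow> A $$ (k, j) = 0"
  shows "det A = A $$ (i, j) * cofactor A i j"
proof -
  have "det A = (\<Sum>k<n. A $$ (k, j) * cofactor A k j)"
    by (rule laplace_expansion_column[OF A \<open>j < n\<close>])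
  also have "\<dots> = (\<Sum>k\<in>{i}. A $$ (k, j) * cofactor A k j)"
    by (rule sum.mono_neutral_cong_right) (use assms in auto)
  finally show ?thesis by simp
qed

lemma mat_delete_mat:
  "mat_delete (mat n n f) i j =
     mat (n - 1) (n - 1) (\<lambda>(k, l). f (if k < i then k else Suc k, if l < j then l else Suc l))"
  unfolding mat_delete_def by (rule eq_matI) auto

lemma det_mat_Suc_first_column:
  fixes f :: "nat \<times> nat \<Rightarrow> 'a::comm_ring_1"
  assumes "\<And>k. 0 < k \<Longrightarrow> k < Suc n \<Longrightarrow> f (k, 0) = 0"
  shows "det (mat (Suc n) (Suc n) f) = f (0, 0) * det (mat n n (\<lambda>(i, j). f (Suc i, Suc j)))"
proof -
  have "det (mat (Suc n) (Suc n) f)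
      = mat (Suc n) (Suc n) f $$ (0, 0) * cofactor (mat (Suc n) (Suc n) f) 0 0"
    by (rule det_eq_entry_mult_cofactor[where n = "Suc n"]) (use assms in auto)
  then show ?thesis unfolding cofactor_def mat_delete_mat by simp
qed

lemma det_mat_2:
  fixes f :: "nat \<times> nat \<Rightarrow> 'a::comm_ring_1"
  shows "det (mat 2 2 f) = f (0, 0) * f (1, 1) - f (1, 0) * f (0, 1)"
proof -
  have "det (mat 2 2 f) = (\<Sum>k<2. mat 2 2 f $$ (k, 0) * cofactor (mat 2 2 f) k 0)"
    by (rule laplace_expansion_column) auto
  then show ?thesis by (simp add: numeral_2_eq_2 cofactor_def mat_delete_mat det_single)
qed

lemma det_mat_3:
  fixes f :: "nat \<times> nat \<Rightarrow> 'a::comm_ring_1"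
  shows "det (mat 3 3 f) =
      f (0, 0) * (f (1, 1) * f (2, 2) - f (1, 2) * f (2, 1))
    - f (1, 0) * (f (0, 1) * f (2, 2) - f (0, 2) * f (2, 1))
    + f (2, 0) * (f (0, 1) * f (1, 2) - f (0, 2) * f (1, 1))"
proof -
  have "det (mat 3 3 f) = (\<Sum>k<3. mat 3 3 f $$ (k, 0) * cofactor (mat 3 3 f) k 0)"
    by (rule laplace_expansion_column) auto
  then show ?thesis
    by (simp add: numeral_3_eq_3 numeral_2_eq_2 cofactor_def mat_delete_mat
        det_mat_2[unfolded numeral_2_eq_2] algebra_simps)
qed

lemma det_mat_6_staircase:
  fixes f :: "nat \<times> nat \<Rightarrow> 'a::comm_ring_1"
  assumes col0: "\<And>k. 0 < k \<Longrightarrow> k < 6 \<Longrightarrow> f (k, 0) = 0"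
    and col1: "\<And>k. 1 < k \<Longrightarrow> k < 6 \<Longrightarrow> f (k, 1) = 0"
    and col3: "\<And>k. 2 < k \<Longrightarrow> k < 6 \<Longrightarrow> f (k, 3) = 0"
  shows "det (mat 6 6 f) = - f (0, 0) * f (1, 1) * f (2, 3) *
      (f (3, 2) * (f (4, 4) * f (5, 5) - f (4, 5) * f (5, 4))
     - f (4, 2) * (f (3, 4) * f (5, 5) - f (3, 5) * f (5, 4))
     + f (5, 2) * (f (3, 4) * f (4, 5) - f (3, 5) * f (4, 4)))"
proof -
  let ?g = "\<lambda>(i, j). f (Suc (Suc i), Suc (Suc j))"
  have "det (mat 6 6 f) = f (0, 0) * det (mat 5 5 (\<lambda>(i, j). f (Suc i, Suc j)))"
    using det_mat_Suc_first_column[of 5 f] col0 by (simp add: numeral_eq_Suc)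
  also have "det (mat 5 5 (\<lambda>(i, j). f (Suc i, Suc j))) = f (1, 1) * det (mat 4 4 ?g)"
    using det_mat_Suc_first_column[of 4 "\<lambda>(i, j). f (Suc i, Suc j)"] col1
    by (simp add: numeral_eq_Suc)
  also have "det (mat 4 4 ?g) = mat 4 4 ?g $$ (0, 1) * cofactor (mat 4 4 ?g) 0 1"
    by (rule det_eq_entry_mult_cofactor[where n = 4])
      (use col3[of "Suc (Suc k)" for k] in \<open>auto simp: numeral_eq_Suc\<close>)
  also have "\<dots> = - f (2, 3) *
      (f (3, 2) * (f (4, 4) * f (5, 5) - f (4, 5) * f (5, 4))
     - f (4, 2) * (f (3, 4) * f (5, 5) - f (3, 5) * f (5, 4))
     + f (5, 2) * (f (3, 4) * f (4, 5) - f (3, 5) * f (4, 4)))"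
    unfolding cofactor_def mat_delete_mat
    by (simp add: det_mat_3, simp add: numeral_eq_Suc algebra_simps)
  finally show ?thesis by (simp add: algebra_simps)
qed

lemma not_lex_less6_id:
  assumes "\<And>i j. i < j \<Longrightarrow> j < 6 \<Longrightarrow> e i < (e j :: nat)"
  shows "\<not> lex_less6 e (\<lambda>i. i)"
proof
  assume "lex_less6 e (\<lambda>i. i)"
  then obtain k where k: "k < 6" "\<forall>i<k. e i = i" "e k < k"
    unfolding lex_less6_def by blast
  then obtain j where "k = Suc j" by (cases k) auto
  with k assms[of j k] show False by auto
qed

lemma nonclassical_imp_conic_det_eq_0:
  assumes "\<not> classical_wrt_conics D x y"
  shows "conic_det D (\<lambda>i. i) x y = 0"
  using assms not_lex_less6_id
  unfolding classical_wrt_conics_def admissible_conic_orders_def by auto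

lemma conic_det_swap: "conic_det D \<epsilon> y x = conic_det D \<epsilon> x y"
proof -
  let ?M = "mat 6 6 (\<lambda>(i, j). D (\<epsilon> i) (conic_monomials x y ! j))"
  have "mat 6 6 (\<lambda>(i, j). D (\<epsilon> i) (conic_monomials y x ! j)) = swapcols 1 2 (swapcols 3 5 ?M)"
  proof (rule eq_matI)
    fix i j assume "i < dim_row (swapcols 1 2 (swapcols 3 5 ?M))"
      and "j < dim_col (swapcols 1 2 (swapcols 3 5 ?M))"
    moreover from this have "j = 0 \<or> j = 1 \<or> j = 2 \<or> j = 3 \<or> j = 4 \<or> j = 5" by auto
    ultimately show "mat 6 6 (\<lambda>(i, j). D (\<epsilon> i) (conic_monomials y x ! j)) $$ (i, j)
        = swapcols 1 2 (swapcols 3 5 ?M) $$ (i, j)"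
      by (auto simp: conic_monomials_def mult.commute)
  qed auto
  moreover have "det (swapcols 1 2 (swapcols 3 5 ?M)) = - det (swapcols 3 5 ?M)"
    by (rule det_swapcols[where n = 6]) simp_all
  moreover have "det (swapcols 3 5 ?M) = - det ?M"
    by (rule det_swapcols[where n = 6]) simp_all
  ultimately show ?thesis by (simp add: conic_det_def)
qed

section \<open>Derivations\<close>

locale derivation_over =
  fixes emb :: "'a::field \<Rightarrow> 'b::field" and d :: "'b \<Rightarrow> 'b"
  assumes d_add: "d (u + v) = d u + d v"
    and d_mult: "d (u * v) = u * d v + d u * v"
    and d_emb: "d (emb c) = 0"
begin

lemma d_0 [simp]: "d 0 = 0"
  using d_add[of 0 0] by (simp only: add_0 add_cancel_right_right)

lemma d_1 [simp]: "d 1 = 0"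
  using d_mult[of 1 1] by (simp only: mult_1_left mult_1_right add_cancel_right_right)

lemma d_of_nat [simp]: "d (of_nat k) = 0"
  by (induction k) (simp_all add: d_add)

lemma d_numeral [simp]: "d (numeral k) = 0"
  using d_of_nat[of "numeral k"] by simp

lemma d_uminus: "d (- u) = - d u"
  using d_add[of u "- u"] by (simp add: eq_neg_iff_add_eq_0 add.commute)

lemma d_sum: "d (\<Sum>i\<in>S. f i) = (\<Sum>i\<in>S. d (f i))"
  by (induction S rule: infinite_finite_induct) (simp_all add: d_add)

lemma d_power: "d (u ^ k) = of_nat k * u ^ (k - 1) * d u"
proof (induction k)
  case (Suc k)
  then show ?case by (cases k) (simp_all add: d_mult algebra_simps)
qed simp

lemma d_inverse: "d (inverse u) = - d u * inverse u ^ 2"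
proof (cases "u = 0")
  case False
  have "u * d (inverse u) = - d u * inverse u"
    using d_mult[of u "inverse u"] False by (simp add: eq_neg_iff_add_eq_0)
  with False show ?thesis by (simp add: field_simps power2_eq_square)
qed simp

lemma d_inverse_power: "d (inverse u ^ k) = - of_nat k * inverse u ^ Suc k * d u"
proof (cases k)
  case (Suc j)
  then have "d (inverse u ^ k) = of_nat k * inverse u ^ j * d (inverse u)"
    using d_power[of "inverse u" k] by simp
  with Suc show ?thesis by (simp add: d_inverse power2_eq_square algebra_simps)
qed simp

lemma d_poly_const_coeffs:
  assumes "\<And>i. d (coeff P i) = 0"
  shows "d (poly P x) = poly (pderiv P) x * d x"
  using assms
proof (induction P)
  case (pCons c P)
  have "d (poly P x) = poly (pderiv P) x * d x"
    using pCons.IH pCons.prems[of "Suc _"] by simp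
  with pCons.prems[of 0] show ?case
    by (simp add: d_add d_mult pderiv_pCons algebra_simps)
qed simp

lemma derivation_over_divide: "derivation_over emb (\<lambda>w. d w / c)"
  by unfold_locales (simp_all add: d_add d_mult d_emb add_divide_distrib)

lemma vanishes_on_gen_field:
  assumes "d x = 0" and "d y = 0" and "z \<in> gen_field emb x y"
  shows "d z = 0"
  using assms(3)
  by induction (simp_all add: assms(1,2) d_emb d_add d_mult d_uminus d_inverse)

end

section \<open>Hasse derivatives\<close>

context
  fixes emb :: "'a::field \<Rightarrow> 'b::field" and \<tau> :: 'b and D :: "nat \<Rightarrow> 'b \<Rightarrow> 'b"
  assumes hasse: "hasse_derivatives_wrt emb \<tau> D"
begin

lemma hasse_0: "D 0 w = w"
  using hasse by (simp add: hasse_derivatives_wrt_def)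

lemma hasse_first_derivation: "derivation_over emb (D 1)"
proof
  fix u v :: 'b and c :: 'a
  show "D 1 (u + v) = D 1 u + D 1 v" "D 1 (emb c) = 0"
    using hasse by (simp_all add: hasse_derivatives_wrt_def)
  show "D 1 (u * v) = u * D 1 v + D 1 u * v"
    using hasse by (simp add: hasse_derivatives_wrt_def hasse_0)
qed

lemma hasse_Suc: "D 1 (D k w) = of_nat (Suc k) * D (Suc k) w"
  using hasse by (simp add: hasse_derivatives_wrt_def)

lemma hasse_divide_derivation: "derivation_over emb (\<lambda>w. D 1 w / c)"
  by (rule derivation_over.derivation_over_divide[OF hasse_first_derivation])

end

text \<open>With \<open>d = D^(1) / \<xi>\<close> and \<open>i!\<close> invertible, the iterative rule for Hasse derivatives gives
  \<open>D^(i) = (\<xi> d)^i / i!\<close>; expanded, this is \<open>D^(i) = (\<Sum>j\<le>i. c i j * d^j)\<close> with the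
  following coefficients \<open>c\<close>.\<close>

fun rescaled_hasse_coeff :: "('b::field \<Rightarrow> 'b) \<Rightarrow> 'b \<Rightarrow> nat \<Rightarrow> nat \<Rightarrow> 'b" where
  "rescaled_hasse_coeff d \<xi> 0 j = (if j = 0 then 1 else 0)"
| "rescaled_hasse_coeff d \<xi> (Suc i) j = \<xi> / of_nat (Suc i) *
     (d (rescaled_hasse_coeff d \<xi> i j) + (if j = 0 then 0 else rescaled_hasse_coeff d \<xi> i (j - 1)))"

context derivation_over
begin

lemma rescaled_hasse_coeff_eq_0: "i < j \<Longrightarrow> rescaled_hasse_coeff d \<xi> i j = 0"
  by (induction i arbitrary: j) simp_all

lemma rescaled_hasse_coeff_diag: "rescaled_hasse_coeff d \<xi> i i = \<xi> ^ i / of_nat (fact i)"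
  by (induction i) (simp_all add: rescaled_hasse_coeff_eq_0 distrib_right)

lemma funpow_const_eq_0: "d c = 0 \<Longrightarrow> 0 < k \<Longrightarrow> (d ^^ k) c = 0"
proof (induction k)
  case (Suc k)
  then show ?case by (cases k) simp_all
qed simp

end

lemma hasse_eq_rescaled_sum:
  fixes D :: "nat \<Rightarrow> 'b::field \<Rightarrow> 'b"
  assumes hasse: "hasse_derivatives_wrt emb \<tau> D" and "\<xi> \<noteq> 0"
    and char: "\<And>k. 0 < k \<Longrightarrow> k < N \<Longrightarrow> of_nat k \<noteq> (0::'b)" and "i < N"
  defines "d \<equiv> \<lambda>w. D 1 w / \<xi>"
  shows "D i w = (\<Sum>j<N. rescaled_hasse_coeff d \<xi> i j * (d ^^ j) w)"
  using \<open>i < N\<close>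
proof (induction i arbitrary: w)
  case 0
  then obtain M where N: "N = Suc M" by (cases N) auto
  show ?case unfolding N sum.lessThan_Suc_shift by (simp add: hasse_0[OF hasse])
next
  case (Suc i)
  interpret derivation_over emb d
    unfolding d_def by (rule hasse_divide_derivation[OF hasse])
  let ?c = "rescaled_hasse_coeff d \<xi>"
  obtain M where N: "N = Suc M" and "i < M" using Suc.prems by (cases N) auto
  have "(\<Sum>j<N. (if j = 0 then 0 else ?c i (j - 1)) * (d ^^ j) w)
      = (\<Sum>j<M. ?c i j * (d ^^ Suc j) w)"
    unfolding N sum.lessThan_Suc_shift by simp
  also have "\<dots> = (\<Sum>j<N. ?c i j * (d ^^ Suc j) w)"
    unfolding N sum.lessThan_Suc using rescaled_hasse_coeff_eq_0[OF \<open>i < M\<close>] by simp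
  finally have shift: "(\<Sum>j<N. (if j = 0 then 0 else ?c i (j - 1)) * (d ^^ j) w)
      = (\<Sum>j<N. ?c i j * (d ^^ Suc j) w)" .
  have "D (Suc i) w = \<xi> / of_nat (Suc i) * d (D i w)"
    using hasse_Suc[OF hasse, of i w] char[of "Suc i"] Suc.prems \<open>\<xi> \<noteq> 0\<close>
    by (simp add: d_def field_simps del: of_nat_Suc)
  also have "\<dots> = \<xi> / of_nat (Suc i) *
      ((\<Sum>j<N. d (?c i j) * (d ^^ j) w) + (\<Sum>j<N. ?c i j * (d ^^ Suc j) w))"
    using Suc by (simp add: d_sum d_mult sum.distrib algebra_simps)
  also have "\<dots> = (\<Sum>j<N. ?c (Suc i) j * (d ^^ j) w)"
    unfolding shift[symmetric] sum.distrib[symmetric] sum_distrib_left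
    by (intro sum.cong) (simp_all add: algebra_simps)
  finally show ?case .
qed

lemma of_nat_fact_neq_0:
  assumes "\<And>k. 0 < k \<Longrightarrow> k \<le> i \<Longrightarrow> of_nat k \<noteq> (0::'a::field)"
  shows "of_nat (fact i) \<noteq> (0::'a)"
  using assms
proof (induction i)
  case (Suc i)
  have "of_nat (fact (Suc i)) = (of_nat (Suc i) :: 'a) * of_nat (fact i)"
    by (simp only: fact_Suc of_nat_mult of_nat_id)
  with Suc show ?case by (simp del: of_nat_Suc)
qed simp

lemma det_hasse_wronskian_eq:
  fixes D :: "nat \<Rightarrow> 'b::field \<Rightarrow> 'b"
  assumes hasse: "hasse_derivatives_wrt emb \<tau> D" and "\<xi> \<noteq> 0"
    and char: "\<And>k. 0 < k \<Longrightarrow> k < N \<Longrightarrow> of_nat k \<noteq> (0::'b)"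
  defines "d \<equiv> \<lambda>w. D 1 w / \<xi>"
  shows "det (mat N N (\<lambda>(i, j). D i (\<phi> j)))
    = (\<Prod>i<N. \<xi> ^ i / of_nat (fact i)) * det (mat N N (\<lambda>(i, j). (d ^^ i) (\<phi> j)))"
proof -
  interpret derivation_over emb d
    unfolding d_def by (rule hasse_divide_derivation[OF hasse])
  let ?C = "mat N N (\<lambda>(i, j). rescaled_hasse_coeff d \<xi> i j)"
  let ?B = "mat N N (\<lambda>(i, j). (d ^^ i) (\<phi> j))"
  have "mat N N (\<lambda>(i, j). D i (\<phi> j)) = ?C * ?B"
    using hasse_eq_rescaled_sum[OF hasse \<open>\<xi> \<noteq> 0\<close> char]
    by (intro eq_matI) (auto simp: scalar_prod_def d_def atLeast0LessThan)
  then have "det (mat N N (\<lambda>(i, j). D i (\<phi> j))) = det ?C * det ?B"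
    by (simp add: det_mult[of _ N])
  moreover have "det ?C = (\<Prod>i<N. \<xi> ^ i / of_nat (fact i))"
    by (subst det_lower_triangular[of N])
      (auto simp: rescaled_hasse_coeff_eq_0 rescaled_hasse_coeff_diag prod_list_diag_prod
        atLeast0LessThan)
  ultimately show ?thesis by simp
qed

section \<open>Monge's differential equation of conics\<close>

definition conic_ode :: "('b::field \<Rightarrow> 'b) \<Rightarrow> 'b \<Rightarrow> 'b" where
  "conic_ode d v = (d ^^ 2) v *
     (40 * ((d ^^ 3) v) ^ 3 - 45 * (d ^^ 2) v * (d ^^ 3) v * (d ^^ 4) v
      + 9 * ((d ^^ 2) v) ^ 2 * (d ^^ 5) v)"

lemma (in derivation_over) conic_det_normalized:
  assumes du: "d u = 1"
  shows "conic_det (\<lambda>i. d ^^ i) (\<lambda>i. i) u v = - 4 * conic_ode d v"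
proof -
  have one: "(d ^^ k) 1 = 0" if "0 < k" for k
    using funpow_const_eq_0[OF d_1 that] .
  have lin: "(d ^^ k) u = 0" if k: "1 < k" for k
  proof -
    obtain j where "k = Suc j" "0 < j" using k by (cases k) auto
    then show ?thesis using one by (simp only: funpow_Suc_right o_apply du)
  qed
  have quad: "(d ^^ k) (u ^ 2) = 0" if k: "2 < k" for k
  proof -
    obtain j where k: "k = Suc (Suc j)" "0 < j" using k by (cases k; cases "k - 1") auto
    have "d (d (u ^ 2)) = 2"
      by (simp add: d_power d_mult du)
    then have "(d ^^ k) (u ^ 2) = (d ^^ j) 2"
      unfolding k by (simp only: funpow_Suc_right o_apply)
    then show ?thesis using funpow_const_eq_0[OF d_numeral k(2)] by simp
  qed
  have powers: "(d ^^ 2) w = d (d w)" "(d ^^ 3) w = d (d (d w))" "(d ^^ 4) w = d (d (d (d w)))"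
    "(d ^^ 5) w = d (d (d (d (d w))))" for w
    by (simp_all add: eval_nat_numeral)
  have "conic_det (\<lambda>i. d ^^ i) (\<lambda>i. i) u v = - 1 * d u * (d ^^ 2) (u ^ 2) *
     ((d ^^ 3) v * ((d ^^ 4) (u * v) * (d ^^ 5) (v ^ 2) - (d ^^ 4) (v ^ 2) * (d ^^ 5) (u * v))
     - (d ^^ 4) v * ((d ^^ 3) (u * v) * (d ^^ 5) (v ^ 2) - (d ^^ 3) (v ^ 2) * (d ^^ 5) (u * v))
     + (d ^^ 5) v * ((d ^^ 3) (u * v) * (d ^^ 4) (v ^ 2) - (d ^^ 3) (v ^ 2) * (d ^^ 4) (u * v)))"
    unfolding conic_det_def
    by (subst det_mat_6_staircase) (auto simp: conic_monomials_def one lin quad)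
  also have "\<dots> = - 4 * conic_ode d v"
    unfolding conic_ode_def powers power2_eq_square
    by (simp add: d_add d_mult du algebra_simps power3_eq_cube)
  finally show ?thesis .
qed

lemma hasse_conic_det_eq_0_imp_conic_ode:
  fixes D :: "nat \<Rightarrow> 'b::field \<Rightarrow> 'b"
  assumes hasse: "hasse_derivatives_wrt emb \<tau> D"
    and char: "\<And>k. 0 < k \<Longrightarrow> k < 6 \<Longrightarrow> of_nat k \<noteq> (0::'b)"
    and "D 1 u \<noteq> 0" and "conic_det D (\<lambda>i. i) u v = 0"
  shows "conic_ode (\<lambda>w. D 1 w / D 1 u) v = 0"
proof -
  let ?d = "\<lambda>w. D 1 w / D 1 u"
  interpret derivation_over emb ?d
    by (rule hasse_divide_derivation[OF hasse])
  have "conic_det D (\<lambda>i. i) u v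
      = (\<Prod>i<6. D 1 u ^ i / of_nat (fact i)) * conic_det (\<lambda>i. ?d ^^ i) (\<lambda>i. i) u v"
    unfolding conic_det_def by (rule det_hasse_wronskian_eq[OF hasse \<open>D 1 u \<noteq> 0\<close> char])
  moreover have "(\<Prod>i<6. D 1 u ^ i / of_nat (fact i)) \<noteq> (0::'b)"
    using \<open>D 1 u \<noteq> 0\<close> of_nat_fact_neq_0[where 'a = 'b] char by auto
  ultimately have "conic_det (\<lambda>i. ?d ^^ i) (\<lambda>i. i) u v = 0"
    using \<open>conic_det D (\<lambda>i. i) u v = 0\<close> by (metis mult_eq_0_iff)
  moreover have "conic_det (\<lambda>i. ?d ^^ i) (\<lambda>i. i) u v = - 4 * conic_ode ?d v"
    using \<open>D 1 u \<noteq> 0\<close> by (intro conic_det_normalized) simp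
  moreover have "(4::'b) \<noteq> 0" using char[of 4] by simp
  ultimately show ?thesis by simp
qed

definition coeffs_vanish_below :: "nat \<Rightarrow> 'a::zero poly \<Rightarrow> bool" where
  "coeffs_vanish_below s p \<longleftrightarrow> (\<forall>i<s. coeff p i = 0)"

lemma coeff_mult_single_term:
  fixes p q :: "'a::comm_semiring_1 poly"
  assumes "s \<le> k" and "\<And>j. j \<le> k \<Longrightarrow> j \<noteq> s \<Longrightarrow> coeff p j * coeff q (k - j) = 0"
  shows "coeff (p * q) k = coeff p s * coeff q (k - s)"
proof -
  have "coeff (p * q) k = (\<Sum>j\<le>k. coeff p j * coeff q (k - j))"
    by (rule coeff_mult)
  also have "\<dots> = (\<Sum>j\<in>{s}. coeff p j * coeff q (k - j))"
    by (rule sum.mono_neutral_cong_right) (use assms in auto)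
  finally show ?thesis by simp
qed

lemma coeffs_vanish_below_mult:
  fixes p q :: "'a::comm_semiring_1 poly"
  assumes "coeffs_vanish_below s p" and "coeffs_vanish_below t q"
  shows "coeffs_vanish_below (s + t) (p * q)"
  unfolding coeffs_vanish_below_def
proof (intro allI impI)
  fix i assume "i < s + t"
  then have "coeff p j * coeff q (i - j) = 0" if "j \<le> i" for j
    using assms that unfolding coeffs_vanish_below_def by (cases "j < s") auto
  then show "coeff (p * q) i = 0"
    by (simp add: coeff_mult)
qed

lemma coeff_mult_lowest:
  fixes p q :: "'a::comm_semiring_1 poly"
  assumes "coeffs_vanish_below s p" and "coeffs_vanish_below t q"
  shows "coeff (p * q) (s + t) = coeff p s * coeff q t"
proof -
  have "coeff p j * coeff q (s + t - j) = 0" if "j \<le> s + t" "j \<noteq> s" for j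
    using assms that unfolding coeffs_vanish_below_def by (cases "j < s") auto
  then show ?thesis using coeff_mult_single_term[of s "s + t" p q] by simp
qed

lemma coeff_mult_top:
  fixes p q :: "'a::comm_semiring_1 poly"
  assumes "degree p \<le> s" and "degree q \<le> t"
  shows "coeff (p * q) (s + t) = coeff p s * coeff q t"
proof -
  have "coeff p j * coeff q (s + t - j) = 0" if "j \<le> s + t" "j \<noteq> s" for j
    using assms that by (cases "j < s") (auto simp: coeff_eq_0)
  then show ?thesis using coeff_mult_single_term[of s "s + t" p q] by simp
qed

lemma coeff_mult3_lowest:
  fixes p q r :: "'a::comm_semiring_1 poly"
  assumes "coeffs_vanish_below s p" "coeffs_vanish_below t q" "coeffs_vanish_below u r"
  shows "coeff (p * q * r) (s + t + u) = coeff p s * coeff q t * coeff r u"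
  using assms coeff_mult_lowest coeffs_vanish_below_mult by metis

lemma coeff_mult3_top:
  fixes p q r :: "'a::comm_semiring_1 poly"
  assumes "degree p \<le> s" "degree q \<le> t" "degree r \<le> u"
  shows "coeff (p * q * r) (s + t + u) = coeff p s * coeff q t * coeff r u"
proof -
  have "degree (p * q) \<le> s + t"
    using assms degree_mult_le[of p q] by linarith
  then show ?thesis using assms coeff_mult_top by metis
qed

section \<open>The polynomials \<open>N\<^sub>k\<close>\<close>

definition euler_deriv :: "'a::idom poly \<Rightarrow> 'a poly" where
  "euler_deriv p = pCons 0 (pderiv p)"

lemma coeff_euler_deriv: "coeff (euler_deriv p) i = of_nat i * coeff p i"
  unfolding euler_deriv_def by (cases i) (auto simp: coeff_pderiv coeff_pCons)

lemma degree_euler_deriv_le: "degree (euler_deriv p) \<le> degree p"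
  by (rule degree_le) (auto simp: coeff_euler_deriv coeff_eq_0)

text \<open>\<open>curve_E a n = (1 - X^n) (1 + a X^n)\<close>. If \<open>d x = 1\<close> on the curve, the quotient rule gives
  \<open>d^k y = y N_k(x) / (x E(x))^k\<close> with \<open>N_k = curve_N A a n k\<close> and \<open>A = - n (a + 1) / m\<close>
  (lemma \<open>funpow_deriv_y\<close>, where \<open>A\<close> is called \<open>deriv_y_coeff\<close>).\<close>

definition curve_E :: "'a::field \<Rightarrow> nat \<Rightarrow> 'a poly" where
  "curve_E a n = 1 + monom (a - 1) n - monom a (2 * n)"

fun curve_N :: "'a::field \<Rightarrow> 'a \<Rightarrow> nat \<Rightarrow> nat \<Rightarrow> 'a poly" where
  "curve_N A a n 0 = 1"
| "curve_N A a n (Suc k) = curve_E a n * euler_deriv (curve_N A a n k)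
     - smult (of_nat k) (curve_E a n * curve_N A a n k)
     - smult (of_nat k) (euler_deriv (curve_E a n) * curve_N A a n k)
     + monom A n * curve_N A a n k"

lemma degree_curve_E_le: "degree (curve_E a n) \<le> 2 * n"
  by (rule degree_le) (auto simp: curve_E_def coeff_monom)

lemma curve_N_lowest_coeff:
  assumes "0 < n" and "0 < k"
  shows "coeffs_vanish_below n (curve_N A a n k) \<and>
    coeff (curve_N A a n k) n = A * (\<Prod>i=1..<k. of_nat n - of_nat i)"
  using \<open>0 < k\<close>
proof (induction k rule: nat_induct_non_zero)
  case 1
  then show ?case by (simp add: euler_deriv_def coeffs_vanish_below_def)
next
  case (Suc k)
  let ?N = "curve_N A a n k" and ?E = "curve_E a n"
  have N: "coeffs_vanish_below n ?N" using Suc.IH ..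
  have E: "coeffs_vanish_below 0 ?E" "coeff ?E 0 = 1"
    using \<open>0 < n\<close> by (simp_all add: coeffs_vanish_below_def curve_E_def coeff_monom)
  have thN: "coeffs_vanish_below n (euler_deriv ?N)"
    using N by (simp add: coeffs_vanish_below_def coeff_euler_deriv)
  have thE: "coeffs_vanish_below n (euler_deriv ?E)"
    using \<open>0 < n\<close> by (auto simp: coeffs_vanish_below_def coeff_euler_deriv curve_E_def coeff_monom)
  have mon: "coeffs_vanish_below n (monom A n)"
    by (simp add: coeffs_vanish_below_def coeff_monom)
  have high_0: "coeff (euler_deriv ?E * ?N) n = 0" "coeff (monom A n * ?N) n = 0"
    using coeffs_vanish_below_mult[OF thE N] coeffs_vanish_below_mult[OF mon N] \<open>0 < n\<close>
    by (simp_all add: coeffs_vanish_below_def)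
  have "coeffs_vanish_below n (curve_N A a n (Suc k))"
    using coeffs_vanish_below_mult[OF E(1) thN] coeffs_vanish_below_mult[OF E(1) N]
      coeffs_vanish_below_mult[OF thE N] coeffs_vanish_below_mult[OF mon N]
    by (auto simp: coeffs_vanish_below_def)
  moreover have "coeff (curve_N A a n (Suc k)) n = A * (\<Prod>i=1..<Suc k. of_nat n - of_nat i)"
    using coeff_mult_lowest[OF E(1) thN] coeff_mult_lowest[OF E(1) N]
      high_0 Suc.IH \<open>0 < k\<close> E(2)
    by (simp add: coeff_euler_deriv prod.atLeastLessThan_Suc algebra_simps)
  ultimately show ?case ..
qed

lemma curve_N_top_coeff:
  assumes "0 < n" and "0 < k"
  shows "degree (curve_N A a n k) \<le> (2 * k - 1) * n \<and>
    coeff (curve_N A a n k) ((2 * k - 1) * n) = A * a ^ (k - 1) * (\<Prod>i=1..<k. of_nat n + of_nat i)"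
  using \<open>0 < k\<close>
proof (induction k rule: nat_induct_non_zero)
  case 1
  then show ?case by (simp add: euler_deriv_def degree_monom_le)
next
  case (Suc k)
  let ?N = "curve_N A a n k" and ?E = "curve_E a n" and ?d = "(2 * k - 1) * n"
  have N: "degree ?N \<le> ?d" using Suc.IH ..
  have E: "degree ?E \<le> 2 * n" "coeff ?E (2 * n) = - a"
    using \<open>0 < n\<close> degree_curve_E_le by (simp_all add: curve_E_def coeff_monom)
  have thN: "degree (euler_deriv ?N) \<le> ?d"
    using N degree_euler_deriv_le order_trans by blast
  have thE: "degree (euler_deriv ?E) \<le> 2 * n"
    using E(1) degree_euler_deriv_le order_trans by blast
  have mon: "degree (monom A n * ?N) \<le> n + ?d"
    using degree_mult_le[of "monom A n" ?N] degree_monom_le[of A n] N by linarith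
  have deg: "(2 * Suc k - 1) * n = 2 * n + ?d"
    using \<open>0 < k\<close> by (simp add: algebra_simps)
  have deg_N: "degree (curve_N A a n (Suc k)) \<le> 2 * n + ?d"
    using degree_mult_le[of ?E "euler_deriv ?N"] degree_mult_le[of ?E ?N]
      degree_mult_le[of "euler_deriv ?E" ?N] mon E(1) thN thE N
    by (auto intro!: degree_add_le degree_diff_le le_trans[OF degree_smult_le])
  have "coeff (monom A n * ?N) (2 * n + ?d) = 0"
    using mon \<open>0 < n\<close> by (intro coeff_eq_0) linarith
  moreover have "a ^ k = a * a ^ (k - 1)"
    using \<open>0 < k\<close> by (simp add: power_eq_if)
  ultimately have "coeff (curve_N A a n (Suc k)) (2 * n + ?d)
      = A * a ^ k * (\<Prod>i=1..<Suc k. of_nat n + of_nat i)"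
    using coeff_mult_top[OF E(1) thN] coeff_mult_top[OF E(1) N] coeff_mult_top[OF thE N]
      Suc.IH \<open>0 < k\<close> E(2)
    by (simp add: coeff_euler_deriv prod.atLeastLessThan_Suc of_nat_diff algebra_simps)
  with deg_N show ?case unfolding deg by simp
qed

definition conic_bracket :: "'a::field \<Rightarrow> 'a \<Rightarrow> nat \<Rightarrow> 'a poly" where
  "conic_bracket A a n = smult 40 (curve_N A a n 3 ^ 3)
     - smult 45 (curve_N A a n 2 * curve_N A a n 3 * curve_N A a n 4)
     + smult 9 (curve_N A a n 2 ^ 2 * curve_N A a n 5)"

lemma coeff_conic_bracket_lowest:
  fixes A a :: "'a::field"
  assumes "0 < n"
  defines "N \<equiv> of_nat n :: 'a"
  shows "coeff (conic_bracket A a n) (3 * n) =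
    A ^ 3 * (2 * (N - 1) ^ 3 * (N - 2) * (2 * N - 1) * (N + 1))"
proof -
  let ?N = "curve_N A a n"
  have low: "coeffs_vanish_below n (?N k)" "coeff (?N k) n = A * (\<Prod>i=1..<k. N - of_nat i)"
    if "0 < k" for k
    using curve_N_lowest_coeff[OF \<open>0 < n\<close> that, where A = A and a = a] by (simp_all add: N_def)
  have v: "coeffs_vanish_below n (?N 2)" "coeffs_vanish_below n (?N 3)"
    "coeffs_vanish_below n (?N 4)" "coeffs_vanish_below n (?N 5)"
    using low(1) by simp_all
  have "3 * n = n + n + n" by simp
  then have "coeff (conic_bracket A a n) (3 * n) =
      40 * (coeff (?N 3) n) ^ 3 - 45 * coeff (?N 2) n * coeff (?N 3) n * coeff (?N 4) n
      + 9 * (coeff (?N 2) n) ^ 2 * coeff (?N 5) n"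
    unfolding \<open>3 * n = n + n + n\<close> conic_bracket_def power2_eq_square power3_eq_cube
      coeff_add coeff_diff coeff_smult coeff_mult3_lowest[OF v(2) v(2) v(2)]
      coeff_mult3_lowest[OF v(1) v(2) v(3)] coeff_mult3_lowest[OF v(1) v(1) v(4)]
    by (simp only: mult.assoc)
  also have "\<dots> = 40 * (A * ((N - 1) * (N - 2))) ^ 3
      - 45 * (A * (N - 1)) * (A * ((N - 1) * (N - 2))) * (A * ((N - 1) * (N - 2) * (N - 3)))
      + 9 * (A * (N - 1)) ^ 2 * (A * ((N - 1) * (N - 2) * (N - 3) * (N - 4)))"
    using low(2)[of 2] low(2)[of 3] low(2)[of 4] low(2)[of 5]
    by (simp add: eval_nat_numeral prod.atLeastLessThan_Suc del: curve_N.simps)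
  also have "\<dots> = A ^ 3 * (2 * (N - 1) ^ 3 * (N - 2) * (2 * N - 1) * (N + 1))"
    by (simp add: algebra_simps power2_eq_square power3_eq_cube)
  finally show ?thesis .
qed

lemma coeff_conic_bracket_top:
  fixes A a :: "'a::field"
  assumes "0 < n"
  defines "N \<equiv> of_nat n :: 'a"
  shows "coeff (conic_bracket A a n) (15 * n) =
    A ^ 3 * a ^ 6 * (2 * (N + 1) ^ 3 * (N + 2) * (2 * N + 1) * (N - 1))"
proof -
  let ?N = "curve_N A a n"
  have high: "degree (?N k) \<le> (2 * k - 1) * n"
    "coeff (?N k) ((2 * k - 1) * n) = A * a ^ (k - 1) * (\<Prod>i=1..<k. N + of_nat i)"
    if "0 < k" for k
    using curve_N_top_coeff[OF \<open>0 < n\<close> that, where A = A and a = a] by (simp_all add: N_def)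
  have deg: "degree (?N 2) \<le> 3 * n" "degree (?N 3) \<le> 5 * n" "degree (?N 4) \<le> 7 * n"
    "degree (?N 5) \<le> 9 * n"
    using high(1)[of 2] high(1)[of 3] high(1)[of 4] high(1)[of 5] by simp_all
  have sums: "5 * n + 5 * n + 5 * n = 15 * n" "3 * n + 5 * n + 7 * n = 15 * n"
    "3 * n + 3 * n + 9 * n = 15 * n"
    by simp_all
  have "coeff (conic_bracket A a n) (15 * n) =
      40 * (coeff (?N 3) (5 * n)) ^ 3
      - 45 * coeff (?N 2) (3 * n) * coeff (?N 3) (5 * n) * coeff (?N 4) (7 * n)
      + 9 * (coeff (?N 2) (3 * n)) ^ 2 * coeff (?N 5) (9 * n)"
    unfolding conic_bracket_def power2_eq_square power3_eq_cube coeff_add coeff_diff coeff_smult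
      coeff_mult3_top[OF deg(2) deg(2) deg(2), unfolded sums]
      coeff_mult3_top[OF deg(1) deg(2) deg(3), unfolded sums]
      coeff_mult3_top[OF deg(1) deg(1) deg(4), unfolded sums]
    by (simp only: mult.assoc)
  also have "\<dots> = 40 * (A * a ^ 2 * ((N + 1) * (N + 2))) ^ 3
      - 45 * (A * a * (N + 1)) * (A * a ^ 2 * ((N + 1) * (N + 2)))
        * (A * a ^ 3 * ((N + 1) * (N + 2) * (N + 3)))
      + 9 * (A * a * (N + 1)) ^ 2 * (A * a ^ 4 * ((N + 1) * (N + 2) * (N + 3) * (N + 4)))"
    using high(2)[of 2] high(2)[of 3] high(2)[of 4] high(2)[of 5]
    by (simp add: eval_nat_numeral prod.atLeastLessThan_Suc del: curve_N.simps)
  also have "\<dots> = A ^ 3 * a ^ 6 * (2 * (N + 1) ^ 3 * (N + 2) * (2 * N + 1) * (N - 1))"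
    by (simp add: algebra_simps eval_nat_numeral)
  finally show ?thesis .
qed

section \<open>The curve\<close>

lemma field_embedding_imp_field_hom:
  assumes "field_embedding emb"
  shows "field_hom emb"
proof -
  have "emb 0 = emb 0 + emb 0"
    using assms by (metis add_0 field_embedding_def)
  then have "emb 0 = 0" by (simp only: add_cancel_right_right)
  with assms show ?thesis
    by unfold_locales (simp_all add: field_embedding_def)
qed

lemma finite_polys_degree_le: "finite {q :: 'a::{zero,finite} poly. degree q \<le> k}"
proof (rule finite_imageD)
  let ?f = "\<lambda>q :: 'a poly. map (coeff q) [0..<Suc k]"
  show "finite (?f ` {q. degree q \<le> k})"
    by (rule finite_subset[OF _ finite_lists_length_eq[OF finite_UNIV, of "Suc k"]]) auto
  show "inj_on ?f {q. degree q \<le> k}"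
  proof (rule inj_onI, rule poly_eqI)
    fix p q :: "'a poly" and i
    assume "p \<in> {q. degree q \<le> k}" "q \<in> {q. degree q \<le> k}" "?f p = ?f q"
    then show "coeff p i = coeff q i"
      by (cases "i \<le> k") (auto simp: coeff_eq_0 map_eq_conv simp del: upt_Suc)
  qed
qed

lemma algebraic_over_finite_imp_root_of_unity:
  fixes hom :: "'a::{field,finite} \<Rightarrow> 'b::field"
  assumes "field_hom hom" and "P \<noteq> 0" and "poly (map_poly hom P) z = 0" and "z \<noteq> 0"
  shows "\<exists>k>0. z ^ k = 1"
proof -
  interpret field_hom hom by fact
  interpret mp: map_poly_idom_hom hom ..
  define r where "r j = [:0, 1:] ^ j mod P" for j
  have "degree (r j) \<le> degree P" for j
    using degree_mod_less[OF \<open>P \<noteq> 0\<close>, of "[:0, 1:] ^ j"]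
    by (cases "r j = 0") (auto simp: r_def)
  then have "range r \<subseteq> {q. degree q \<le> degree P}" by auto
  then have "\<not> inj r"
    using finite_subset[OF _ finite_polys_degree_le] range_inj_infinite by blast
  then obtain i j where "i \<noteq> j" and "r i = r j"
    unfolding inj_def by blast
  then obtain i j where "i < j" and "r i = r j"
    using nat_neq_iff[of i j] by auto
  have pow: "z ^ j = poly (map_poly hom (r j)) z" for j
  proof -
    have "[:0, 1:] ^ j = [:0, 1:] ^ j div P * P + r j" by (simp add: r_def)
    from arg_cong[OF this, of "map_poly hom"]
    have "map_poly hom ([:0, 1:] ^ j)
        = map_poly hom ([:0, 1:] ^ j div P) * map_poly hom P + map_poly hom (r j)"
      unfolding mp.hom_add mp.hom_mult .
    from arg_cong[OF this, of "\<lambda>q. poly q z"] show ?thesis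
      using assms(3) by (simp add: mp.hom_power)
  qed
  have "z ^ i = z ^ j"
    using pow[of i] pow[of j] \<open>r i = r j\<close> by simp
  moreover have "z ^ i * z ^ (j - i) = z ^ j"
    using \<open>i < j\<close> by (simp flip: power_add)
  ultimately have "z ^ i * z ^ (j - i) = z ^ i * 1" by simp
  then have "z ^ (j - i) = 1" using \<open>z \<noteq> 0\<close> by simp
  with \<open>i < j\<close> show ?thesis by (intro exI[of _ "j - i"]) simp
qed

locale generic_curve_point =
  fixes emb :: "'a::field \<Rightarrow> 'b::field" and a :: 'a and n m :: nat and x y :: 'b
  assumes generic: "generic_point_of_curve emb a n m x y"
    and a_neq_minus_1: "a \<noteq> -1" and n_pos: "0 < n" and m_pos: "0 < m"
begin

sublocale field_hom emb
  using generic by (simp add: generic_point_of_curve_def field_embedding_imp_field_hom)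

sublocale mp: map_poly_idom_hom emb ..

abbreviation ev :: "'a poly \<Rightarrow> 'b" where
  "ev q \<equiv> poly (map_poly emb q) x"

lemma curve_eq: "emb a * x ^ n * y ^ m + x ^ n + y ^ m = 1"
  using generic by (simp add: generic_point_of_curve_def)

lemma ev_eq_0_iff: "ev q = 0 \<longleftrightarrow> q = 0"
  using generic by (auto simp: generic_point_of_curve_def transcendental_over_def)

lemma x_neq_0: "x \<noteq> 0"
  using ev_eq_0_iff[of "[:0, 1:]"] by simp

lemma one_minus_x_pow_neq_0: "1 - x ^ n \<noteq> 0"
proof -
  have "coeff (1 - monom 1 n) 0 = (1::'a)"
    using n_pos by (simp add: coeff_monom)
  then have "ev (1 - monom 1 n) \<noteq> 0"
    unfolding ev_eq_0_iff by (metis coeff_0 one_neq_zero)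
  then show ?thesis by (simp add: hom_distribs poly_monom)
qed

lemma y_pow_eq: "y ^ m * (emb a * x ^ n + 1) = 1 - x ^ n"
  using curve_eq by (simp add: algebra_simps)

lemma emb_a_x_pow_plus_1_neq_0: "emb a * x ^ n + 1 \<noteq> 0"
  using y_pow_eq one_minus_x_pow_neq_0 by auto

lemma y_neq_0: "y \<noteq> 0"
  using y_pow_eq one_minus_x_pow_neq_0 m_pos by (auto simp: zero_power)

lemma emb_a_plus_1_neq_0: "emb a + 1 \<noteq> 0"
proof
  assume "emb a + 1 = 0"
  then have "emb (a + 1) = 0" by (simp add: hom_distribs)
  then have "a + 1 = 0" by simp
  with a_neq_minus_1 show False using eq_neg_iff_add_eq_0 by blast
qed

lemma curve_eq_factored: "(emb a * y ^ m + 1) * (emb a * x ^ n + 1) = emb a + 1"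
proof -
  have "emb a * (emb a * x ^ n * y ^ m + x ^ n + y ^ m) = emb a"
    using curve_eq by simp
  then show ?thesis by (simp add: algebra_simps)
qed

lemma emb_a_y_pow_plus_1_neq_0: "emb a * y ^ m + 1 \<noteq> 0"
  using curve_eq_factored emb_a_plus_1_neq_0 by auto

end

lemma generic_curve_point_swap:
  fixes emb :: "'a::{field,finite} \<Rightarrow> 'b::field"
  assumes "generic_curve_point emb a n m x y"
  shows "generic_curve_point emb a m n y x"
proof -
  interpret generic_curve_point emb a n m x y by fact
  \<comment> \<open>An algebraic \<open>y\<close> would be a root of unity, forcing \<open>(1 - x^n)^k = (1 + a x^n)^k\<close>,
    which fails at \<open>x = 1\<close> as \<open>a \<noteq> -1\<close>.\<close>
  have "transcendental_over emb y"
    unfolding transcendental_over_def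
  proof (intro allI impI notI)
    fix P :: "'a poly" assume "P \<noteq> 0" and "poly (map_poly emb P) y = 0"
    then obtain k where "0 < k" and "y ^ k = 1"
      using algebraic_over_finite_imp_root_of_unity field_hom_axioms y_neq_0 by blast
    have "(y ^ m) ^ k = (y ^ k) ^ m"
      by (simp flip: power_mult add: mult.commute)
    then have "(1 - x ^ n) ^ k = (y ^ k) ^ m * (emb a * x ^ n + 1) ^ k"
      by (simp flip: y_pow_eq add: power_mult_distrib)
    then have "ev ((1 - monom 1 n) ^ k - (1 + monom a n) ^ k) = 0"
      using \<open>y ^ k = 1\<close> by (simp add: hom_distribs poly_monom add.commute)
    then have "poly ((1 - monom 1 n) ^ k - (1 + monom a n) ^ k) 1 = 0"
      unfolding ev_eq_0_iff by simp
    moreover have "(1 + a) ^ k \<noteq> 0"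
      using a_neq_minus_1 by (simp add: add_eq_0_iff)
    ultimately show False
      using \<open>0 < k\<close> by (simp add: poly_monom zero_power)
  qed
  with generic show ?thesis
    by unfold_locales
      (auto simp: generic_point_of_curve_def a_neq_minus_1 m_pos n_pos algebra_simps)
qed

context generic_curve_point
begin

lemma ev_curve_E: "ev (curve_E a n) = (1 - x ^ n) * (emb a * x ^ n + 1)"
proof -
  have "x ^ (2 * n) = x ^ n * x ^ n" by (simp add: mult_2 power_add)
  then show ?thesis by (simp add: curve_E_def hom_distribs poly_monom algebra_simps)
qed

lemma ev_curve_E_neq_0: "ev (curve_E a n) \<noteq> 0"
  using one_minus_x_pow_neq_0 emb_a_x_pow_plus_1_neq_0 by (simp add: ev_curve_E)

lemma ev_euler_deriv: "ev (euler_deriv q) = x * ev (pderiv q)"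
  by (simp add: euler_deriv_def hom_distribs)

lemma derivation_ev:
  assumes "derivation_over emb d"
  shows "d (ev q) = ev (pderiv q) * d x"
proof -
  interpret derivation_over emb d by fact
  show ?thesis by (subst d_poly_const_coeffs) (simp_all add: d_emb hom_distribs)
qed

lemma derivation_curve_eq:
  assumes "derivation_over emb d"
  shows "of_nat n * x ^ (n - 1) * d x * (emb a * y ^ m + 1)
    + of_nat m * y ^ (m - 1) * d y * (emb a * x ^ n + 1) = 0"
proof -
  interpret derivation_over emb d by fact
  have "d (emb a * x ^ n * y ^ m + x ^ n + y ^ m) = 0"
    using curve_eq by simp
  then show ?thesis by (simp add: d_add d_mult d_emb d_power algebra_simps)
qed

lemma derivation_neq_0_at_generators:
  assumes der: "derivation_over emb d" and "\<tau> \<in> gen_field emb x y" and "d \<tau> \<noteq> 0"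
    and "of_nat n \<noteq> (0::'a)" and "of_nat m \<noteq> (0::'a)"
  shows "d x \<noteq> 0" and "d y \<noteq> 0"
proof -
  interpret derivation_over emb d by fact
  have "of_nat n \<noteq> (0::'b)" "of_nat m \<noteq> (0::'b)"
    using assms(4,5) by (metis hom_0_iff hom_of_nat)+
  then have "d x = 0 \<longleftrightarrow> d y = 0"
    using derivation_curve_eq[OF der] x_neq_0 y_neq_0 emb_a_x_pow_plus_1_neq_0
      emb_a_y_pow_plus_1_neq_0
    by auto
  moreover have "d x \<noteq> 0 \<or> d y \<noteq> 0"
    using vanishes_on_gen_field assms(2,3) by blast
  ultimately show "d x \<noteq> 0" and "d y \<noteq> 0" by blast+
qed

definition deriv_y_coeff :: 'a where
  "deriv_y_coeff = - of_nat n * (a + 1) / of_nat m"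

context
  fixes d :: "'b \<Rightarrow> 'b"
  assumes der: "derivation_over emb d" and dx: "d x = 1" and m_char: "of_nat m \<noteq> (0::'a)"
begin

interpretation derivation_over emb d by (fact der)

lemma deriv_y: "d y = y * emb deriv_y_coeff * x ^ n * inverse (x * ev (curve_E a n))"
proof -
  let ?c = "emb a * x ^ n + 1"
  have m: "of_nat m \<noteq> (0::'b)"
    using m_char by (metis hom_0_iff hom_of_nat)
  have xn: "x ^ n = x * x ^ (n - 1)" and ym: "y ^ m = y * y ^ (m - 1)"
    using n_pos m_pos by (simp_all add: power_eq_if)
  have E: "ev (curve_E a n) = y * y ^ (m - 1) * ?c * ?c"
    using y_pow_eq ym by (simp add: ev_curve_E mult.assoc)
  have "emb deriv_y_coeff = - of_nat n * (emb a + 1) / of_nat m"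
    by (simp add: deriv_y_coeff_def hom_distribs)
  then have coeff: "emb deriv_y_coeff = - of_nat n * ((emb a * y ^ m + 1) * ?c) / of_nat m"
    by (simp only: curve_eq_factored)
  have rel: "of_nat m * (y ^ (m - 1) * d y * ?c) = - (of_nat n * x ^ (n - 1) * (emb a * y ^ m + 1))"
    using derivation_curve_eq[OF der] dx by (simp add: algebra_simps eq_neg_iff_add_eq_0)
  have "d y * (x * ev (curve_E a n)) = x * y * ?c * (y ^ (m - 1) * d y * ?c)"
    by (simp add: E algebra_simps)
  also have "y ^ (m - 1) * d y * ?c = - of_nat n * x ^ (n - 1) * (emb a * y ^ m + 1) / of_nat m"
    using rel m by (simp add: field_simps)
  also have "x * y * ?c * (- of_nat n * x ^ (n - 1) * (emb a * y ^ m + 1) / of_nat m)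
      = y * emb deriv_y_coeff * x ^ n"
    unfolding coeff xn by (simp add: field_simps)
  finally show ?thesis
    using x_neq_0 ev_curve_E_neq_0 by (simp add: field_simps)
qed

lemma funpow_deriv_y:
  "(d ^^ k) y = y * ev (curve_N deriv_y_coeff a n k) * inverse (x * ev (curve_E a n)) ^ k"
proof (induction k)
  case (Suc k)
  let ?E = "curve_E a n" and ?N = "curve_N deriv_y_coeff a n k"
  define Z where "Z = inverse (x * ev ?E)"
  have xEZ: "x * ev ?E * Z = 1"
    unfolding Z_def by (rule right_inverse) (simp add: x_neq_0 ev_curve_E_neq_0)
  have dZ: "d (Z ^ k) = - of_nat k * Z ^ Suc k * (ev ?E + x * ev (pderiv ?E))"
    unfolding Z_def d_inverse_power by (simp add: d_mult dx derivation_ev[OF der])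
  have dy: "d y = y * (emb deriv_y_coeff * x ^ n) * Z"
    by (simp add: deriv_y Z_def)
  have N: "ev (curve_N deriv_y_coeff a n (Suc k))
      = ev ?E * (x * ev (pderiv ?N)) - of_nat k * (ev ?E * ev ?N)
      - of_nat k * (x * ev (pderiv ?E) * ev ?N) + emb deriv_y_coeff * x ^ n * ev ?N"
    by (simp add: hom_distribs ev_euler_deriv poly_monom)
  have "y * Z ^ Suc k * (ev ?E * (x * ev (pderiv ?N)))
      = y * ev (pderiv ?N) * Z ^ k * (x * ev ?E * Z)"
    by (simp add: algebra_simps)
  then have xEZ': "y * Z ^ Suc k * (ev ?E * (x * ev (pderiv ?N))) = y * ev (pderiv ?N) * Z ^ k"
    by (simp only: xEZ mult_1_right)
  have "(d ^^ Suc k) y = y * ev ?N * d (Z ^ k) + (y * d (ev ?N) + d y * ev ?N) * Z ^ k"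
    using Suc by (simp add: Z_def d_mult)
  also have "\<dots> = y * ev (curve_N deriv_y_coeff a n (Suc k)) * Z ^ Suc k"
    unfolding N dZ dy derivation_ev[OF der] dx using xEZ' by (simp add: algebra_simps)
  finally show ?case by (simp add: Z_def)
qed simp

lemma conic_ode_y:
  "conic_ode d y = y ^ 4 * inverse (x * ev (curve_E a n)) ^ 11
    * (ev (curve_N deriv_y_coeff a n 2) * ev (conic_bracket deriv_y_coeff a n))"
proof -
  have factor: "(y * N2 * Z ^ 2) * (40 * (y * N3 * Z ^ 3) ^ 3
      - 45 * (y * N2 * Z ^ 2) * (y * N3 * Z ^ 3) * (y * N4 * Z ^ 4)
      + 9 * (y * N2 * Z ^ 2) ^ 2 * (y * N5 * Z ^ 5))
    = y ^ 4 * Z ^ 11 * (N2 * (40 * N3 ^ 3 - 45 * N2 * N3 * N4 + 9 * N2 ^ 2 * N5))"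
    for N2 N3 N4 N5 Z :: 'b
    by (simp add: algebra_simps eval_nat_numeral)
  show ?thesis
    unfolding conic_ode_def funpow_deriv_y factor
    by (simp add: conic_bracket_def hom_distribs)
qed

lemma conic_ode_y_eq_0_imp_coeff_conditions:
  assumes "a \<noteq> 0" and "of_nat n \<noteq> (0::'a)" and "conic_ode d y = 0"
  defines "N \<equiv> of_nat n :: 'a"
  shows "N - 1 = 0 \<or> (2 * (N - 1) ^ 3 * (N - 2) * (2 * N - 1) * (N + 1) = 0 \<and>
    2 * (N + 1) ^ 3 * (N + 2) * (2 * N + 1) * (N - 1) = 0)"
proof -
  have "deriv_y_coeff \<noteq> 0"
    using assms(2) m_char a_neq_minus_1 by (simp add: deriv_y_coeff_def eq_neg_iff_add_eq_0)
  have "ev (curve_N deriv_y_coeff a n 2) * ev (conic_bracket deriv_y_coeff a n) = 0"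
    using conic_ode_y assms(3) y_neq_0 x_neq_0 ev_curve_E_neq_0 by simp
  then consider "curve_N deriv_y_coeff a n 2 = 0" | "conic_bracket deriv_y_coeff a n = 0"
    using ev_eq_0_iff by (auto simp flip: hom_distribs)
  then show ?thesis
  proof cases
    case 1
    then have "deriv_y_coeff * (N - 1) = 0"
    proof -
      have "{1..<2} = {1::nat}" by auto
      with 1 show ?thesis
        using curve_N_lowest_coeff[OF n_pos, of 2 deriv_y_coeff a] by (simp add: N_def)
    qed
    with \<open>deriv_y_coeff \<noteq> 0\<close> show ?thesis by simp
  next
    case 2
    then show ?thesis
      using coeff_conic_bracket_lowest[OF n_pos, of deriv_y_coeff a]
        coeff_conic_bracket_top[OF n_pos, of deriv_y_coeff a] \<open>deriv_y_coeff \<noteq> 0\<close> \<open>a \<noteq> 0\<close>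
      by (simp add: N_def)
  qed
qed

end

end

lemma coeff_conditions_imp_square_eq_1:
  fixes N :: "'a::field"
  assumes "(2::'a) \<noteq> 0" and "(5::'a) \<noteq> 0"
    and "N - 1 = 0 \<or> (2 * (N - 1) ^ 3 * (N - 2) * (2 * N - 1) * (N + 1) = 0 \<and>
      2 * (N + 1) ^ 3 * (N + 2) * (2 * N + 1) * (N - 1) = 0)"
  shows "(N + 1) * (N - 1) = 0"
proof (rule ccontr)
  assume "(N + 1) * (N - 1) \<noteq> 0"
  with assms(1,3) have "N = 2 \<or> 2 * N = 1" and "N = -2 \<or> 2 * N = -1"
    by (auto simp: eq_neg_iff_add_eq_0)
  then have "(2::'a) * 2 = 0 \<or> (5::'a) = 0 \<or> (2::'a) = 0"
    by (auto simp: algebra_simps)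
  with assms(1,2) show False by (simp only: mult_eq_0_iff simp_thms)
qed

lemma (in generic_curve_point) conic_det_eq_0_imp_of_nat_eq_0:
  fixes D :: "nat \<Rightarrow> 'b \<Rightarrow> 'b"
  assumes hasse: "hasse_derivatives_wrt emb \<tau> D"
    and char: "\<And>k. 0 < k \<Longrightarrow> k < 6 \<Longrightarrow> of_nat k \<noteq> (0::'a)"
    and "of_nat n \<noteq> (0::'a)" and "of_nat m \<noteq> (0::'a)" and "a \<noteq> 0"
    and "D 1 x \<noteq> 0" and "conic_det D (\<lambda>i. i) x y = 0"
  shows "of_nat ((n + 1) * (n - 1)) = (0::'a)"
proof -
  let ?d = "\<lambda>w. D 1 w / D 1 x"
  have "of_nat k \<noteq> (0::'b)" if "0 < k" "k < 6" for k
    using char[OF that] by (metis hom_0_iff hom_of_nat)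
  then have "conic_ode ?d y = 0"
    using hasse_conic_det_eq_0_imp_conic_ode[OF hasse] assms(6,7) by blast
  moreover have "derivation_over emb ?d"
    by (rule hasse_divide_derivation[OF hasse])
  moreover have "?d x = 1" using \<open>D 1 x \<noteq> 0\<close> by simp
  ultimately have "(of_nat n + 1) * (of_nat n - 1) = (0::'a)"
    using conic_ode_y_eq_0_imp_coeff_conditions assms(3-5) char[of 2] char[of 5]
    by (intro coeff_conditions_imp_square_eq_1) simp_all
  moreover have "of_nat (n - 1) = of_nat n - (1::'a)"
    using n_pos by (simp add: of_nat_diff)
  ultimately show ?thesis by (simp only: of_nat_mult of_nat_add of_nat_1)
qed

theorem proposition4p4:
  fixes a :: "'a::{field,finite}" and emb :: "'a \<Rightarrow> 'b::field"
    and x y \<tau> :: 'b and D :: "nat \<Rightarrow> 'b \<Rightarrow> 'b" and p h m n :: nat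
  assumes "prime p" and "p > 5" and "card (UNIV :: 'a set) = p ^ h"
    and "a \<noteq> 0" and "a \<noteq> -1"
    and "m > 0" and "n > 0" and "\<not> p dvd m * n" and "n \<ge> m" and "min m n > 2"
    and "generic_point_of_curve emb a n m x y"
    and "\<tau> \<in> gen_field emb x y"
    and "hasse_derivatives_wrt emb \<tau> D"
    and "\<not> classical_wrt_conics D x y"
  shows "p dvd (n + 1) * (n - 1) \<and> p dvd (m + 1) * (m - 1)"
proof -
  interpret xy: generic_curve_point emb a n m x y
    using assms by unfold_locales auto
  interpret yx: generic_curve_point emb a m n y x
    using generic_curve_point_swap xy.generic_curve_point_axioms .
  have of_nat_eq_0: "of_nat k = (0::'a) \<longleftrightarrow> p dvd k" for k
    using CHAR_eq_prime_of_card[OF assms(1,3)] by (simp add: of_nat_eq_0_iff_char_dvd)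
  have char: "of_nat k \<noteq> (0::'a)" if "0 < k" "k < 6" for k
    using that \<open>p > 5\<close> by (auto simp: of_nat_eq_0 dest: dvd_imp_le)
  have nm: "of_nat n \<noteq> (0::'a)" "of_nat m \<noteq> (0::'a)"
    using \<open>\<not> p dvd m * n\<close> by (auto simp: of_nat_eq_0)
  have "D 1 \<tau> \<noteq> 0"
    using \<open>hasse_derivatives_wrt emb \<tau> D\<close> by (simp add: hasse_derivatives_wrt_def)
  then have "D 1 x \<noteq> 0" and "D 1 y \<noteq> 0"
    using xy.derivation_neq_0_at_generators[OF hasse_first_derivation] assms(12,13) nm by blast+
  moreover have "conic_det D (\<lambda>i. i) x y = 0" and "conic_det D (\<lambda>i. i) y x = 0"
    using nonclassical_imp_conic_det_eq_0[OF assms(14)] by (simp_all add: conic_det_swap)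
  ultimately have "of_nat ((n + 1) * (n - 1)) = (0::'a)" and "of_nat ((m + 1) * (m - 1)) = (0::'a)"
    using xy.conic_det_eq_0_imp_of_nat_eq_0 yx.conic_det_eq_0_imp_of_nat_eq_0
      assms(4,13) char nm by blast+
  then show ?thesis by (simp only: of_nat_eq_0)
qed

end
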